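(* For every integer $n\ge 1$, letting $\mu=\mu(n)$ be the exponent of the highest power of $2$ dividing $n$, $$t^{\mu}\bigl(B_{n+1}(t)+B_{n-1}(t)\bigr)=\bigl(B_{2^{\mu}+1}(t)+B_{2^{\mu}-1}(t)\bigr)B_{n}(t).$$ In particular, if $n$ is odd then $B_{n+1}(t)+B_{n-1}(t)=tB_n(t)$.
   Context: The Stern polynomials $B_n(t)\in\mathbb{Z}[t]$, $n\ge 0$, are defined by $B_0(t)=0$, $B_1(t)=1$, $B_{2n}(t)=tB_n(t)$ and $B_{2n+1}(t)=B_n(t)+B_{n+1}(t)$ for $n\ge 1$. *)

theory Defs
  imports "HOL-Computational_Algebra.Polynomial" "HOL-Computational_Algebra.Primes"
begin

function stern_poly :: "nat \<Rightarrow> int poly" where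
  "stern_poly n =
     (if n = 0 then 0
      else if n = 1 then 1
      else if even n then pCons 0 (stern_poly (n div 2))
      else stern_poly (n div 2) + stern_poly (n div 2 + 1))"
  by pat_completeness auto
termination
  by (relation "measure id") (auto, presburger+)

end

theory Submission
  imports Defs
begin

(* Write t = [:0,1:] and S(n) = B(n+1) + B(n-1) for the "neighbour sum" of Stern polynomials.  From the recursions B(2N) = t B(N) and B(2N+1) = B(N) + B(N+1) one gets
     (a) S(n) = t B(n) for odd n, and
     (b) S(2N) = 2 B(N) + S(N) for N >= 1.
   Writing n = 2^k m with m odd, induction on k using (a), (b) and B(2^k m) = t^k B(m) gives
     S(2^k m) = S(2^k) B(m),
   i.e. the neighbour sum factors through the odd part of n.  Multiplying by t^k and using
   B(n) = t^k B(m) yields the theorem, with k the 2-adic valuation of n; the odd case is (a). *)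

(* The defining equation unfolds indefinitely, so it is only used through the lemmas below. *)
declare stern_poly.simps[simp del]

lemma stern_poly_0 [simp]: "stern_poly 0 = 0"
  by (simp add: stern_poly.simps)

lemma stern_poly_1 [simp]: "stern_poly (Suc 0) = 1"
  by (simp add: stern_poly.simps)

lemma stern_poly_double: "stern_poly (2 * n) = [:0, 1:] * stern_poly n"
  using stern_poly.simps[of "2 * n"] by (cases "n = 0") simp_all

lemma stern_poly_double_plus_1: "stern_poly (2 * n + 1) = stern_poly n + stern_poly (n + 1)"
  using stern_poly.simps[of "2 * n + 1"] by (cases "n = 0") simp_all

lemma stern_poly_2: "stern_poly 2 = [:0, 1:]"
  using stern_poly_double[of 1] by simp

lemma stern_poly_pow2_mult: "stern_poly (2 ^ k * m) = [:0, 1:] ^ k * stern_poly m"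
  by (induction k) (simp_all add: stern_poly_double mult.assoc)

definition neighbour_sum :: "nat \<Rightarrow> int poly" where
  "neighbour_sum n = stern_poly (n + 1) + stern_poly (n - 1)"

lemma neighbour_sum_odd:
  assumes "odd n"
  shows "neighbour_sum n = [:0, 1:] * stern_poly n"
proof -
  obtain m where n: "n = 2 * m + 1" using assms by (elim oddE)
  have "n + 1 = 2 * (m + 1)" "n - 1 = 2 * m" using n by simp_all
  then have "neighbour_sum n = stern_poly (2 * (m + 1)) + stern_poly (2 * m)"
    unfolding neighbour_sum_def by simp
  also have "\<dots> = [:0, 1:] * stern_poly (2 * m + 1)"
    unfolding stern_poly_double stern_poly_double_plus_1 by (simp add: algebra_simps)
  finally show ?thesis unfolding n .
qed

lemma neighbour_sum_double:
  assumes "N \<ge> 1"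
  shows "neighbour_sum (2 * N) = 2 * stern_poly N + neighbour_sum N"
proof -
  have "2 * N - 1 = 2 * (N - 1) + 1" "N - 1 + 1 = N" using assms by simp_all
  then have "stern_poly (2 * N - 1) = stern_poly (N - 1) + stern_poly N"
    by (simp only: stern_poly_double_plus_1)
  moreover have "stern_poly (2 * N + 1) = stern_poly N + stern_poly (N + 1)"
    by (rule stern_poly_double_plus_1)
  ultimately show ?thesis
    unfolding neighbour_sum_def by (simp add: algebra_simps mult_2)
qed

lemma neighbour_sum_pow2_mult:
  assumes "odd m"
  shows "neighbour_sum (2 ^ k * m) = neighbour_sum (2 ^ k) * stern_poly m"
proof (induction k)
  case 0
  show ?case
    using neighbour_sum_odd[OF assms] neighbour_sum_odd[of 1]
    by (simp add: stern_poly_2)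
next
  case (Suc k)
  have pos: "2 ^ k * m \<ge> 1" "(1::nat) \<le> 2 ^ k"
    using assms by (simp_all add: Suc_le_eq odd_pos)
  have "neighbour_sum (2 ^ Suc k * m) = 2 * stern_poly (2 ^ k * m) + neighbour_sum (2 ^ k * m)"
    using neighbour_sum_double[OF pos(1)] by (simp add: mult.assoc)
  also have "\<dots> = (2 * stern_poly (2 ^ k) + neighbour_sum (2 ^ k)) * stern_poly m"
    using stern_poly_pow2_mult[of k 1]
    unfolding Suc.IH stern_poly_pow2_mult[of k m] by (simp add: algebra_simps)
  also have "2 * stern_poly (2 ^ k) + neighbour_sum (2 ^ k) = neighbour_sum (2 ^ Suc k)"
    using neighbour_sum_double[OF pos(2)] by simp
  finally show ?case .
qed

theorem mainTheorem3:
  fixes n :: nat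
  assumes "n \<ge> 1"
  shows "([:0, 1:] ^ multiplicity (2::nat) n * (stern_poly (n + 1) + stern_poly (n - 1))
           = (stern_poly (2 ^ multiplicity (2::nat) n + 1) + stern_poly (2 ^ multiplicity (2::nat) n - 1))
             * stern_poly n) \<and>
         (odd n \<longrightarrow> stern_poly (n + 1) + stern_poly (n - 1) = [:0, 1:] * stern_poly n)"
proof
  define k where "k = multiplicity (2::nat) n"
  obtain m where n: "n = 2 ^ k * m" and m_odd: "odd m"
    using multiplicity_decompose'[of n 2] assms unfolding k_def by auto
  have "[:0, 1:] ^ k * neighbour_sum n = neighbour_sum (2 ^ k) * stern_poly n"
    unfolding n neighbour_sum_pow2_mult[OF m_odd] stern_poly_pow2_mult by (simp only: mult_ac)
  then show "[:0, 1:] ^ multiplicity (2::nat) n * (stern_poly (n + 1) + stern_poly (n - 1))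
      = (stern_poly (2 ^ multiplicity (2::nat) n + 1) + stern_poly (2 ^ multiplicity (2::nat) n - 1))
        * stern_poly n"
    unfolding k_def neighbour_sum_def .
  show "odd n \<longrightarrow> stern_poly (n + 1) + stern_poly (n - 1) = [:0, 1:] * stern_poly n"
    using neighbour_sum_odd unfolding neighbour_sum_def by blast
qed

end
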